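(* Let $\omega_2\in\mathbb{D}$, $\omega_1,\omega_4\in\overline{\mathbb{D}}$, $\alpha_1,\alpha_2,\alpha_3,\beta_1,\beta_2,\gamma\in\mathbb{C}$, and $$T=\begin{pmatrix}\omega_1&\alpha_1&\beta_1&\gamma\\0&\omega_2&\alpha_2&\beta_2\\0&0&0&\alpha_3\\0&0&0&\omega_4\end{pmatrix}\in\mathcal{M}_4(\mathbb{C}).$$ Write $\delta_i=1-|\omega_i|^2$ for $i=1,2,4$. Then $T$ is a contraction on $\mathbb{C}^4$ if and only if one of the following holds: (A) $|\alpha_1|^2\le\delta_1\delta_2$, $|\alpha_3|^2\le\delta_4$, $|\alpha_2|^2=\delta_2$, $\beta_1=-\dfrac{\alpha_1\alpha_2\overline{\omega_2}}{\delta_2}$, $\beta_2=0$, and $$|\gamma|^2\delta_2\le(\delta_1\delta_2-|\alpha_1|^2)(\delta_4-|\alpha_3|^2);$$ (B) $|\alpha_1|^2\le\delta_1\delta_2$, $|\alpha_3|^2\le\delta_4$, $|\alpha_2|^2<\delta_2$, $$|\beta_1\delta_2+\alpha_1\alpha_2\overline{\omega_2}|^2\le(\delta_1\delta_2-|\alpha_1|^2)(\delta_2-|\alpha_2|^2),\qquad |\beta_2|^2\le(\delta_2-|\alpha_2|^2)(\delta_4-|\alpha_3|^2),$$ and $$\big|\gamma(\delta_2-|\alpha_2|^2)+\beta_2(\overline{\omega_2}\alpha_1+\overline{\alpha_2}\beta_1)\big|^2\delta_2\le\Big[(\delta_1\delta_2-|\alpha_1|^2)(\delta_2-|\alpha_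2|^2)-|\beta_1\delta_2+\alpha_1\alpha_2\overline{\omega_2}|^2\Big]\cdot\Big[(\delta_2-|\alpha_2|^2)(\delta_4-|\alpha_3|^2)-|\beta_2|^2\Big].$$
   Context: $\mathbb{D}$ denotes the open unit disk in $\mathbb{C}$ and $\overline{\mathbb{D}}$ the closed unit disk. $\mathbb{C}^4$ carries its standard inner product, and a matrix $T$ is a contraction if its Euclidean operator norm satisfies $\|T\|\le1$. $\overline{z}$ denotes complex conjugation. *)

theory Defs
  imports "HOL-Analysis.Analysis"
begin

definition Tmat :: "complex \<Rightarrow> complex \<Rightarrow> complex \<Rightarrow> complex \<Rightarrow> complex \<Rightarrow> complex \<Rightarrow>
    complex \<Rightarrow> complex \<Rightarrow> complex \<Rightarrow> complex ^ 4 ^ 4" where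
  "Tmat w1 w2 w4 a1 a2 a3 b1 b2 g =
     vector [vector [w1, a1, b1, g],
             vector [0, w2, a2, b2],
             vector [0, 0, 0, a3],
             vector [0, 0, 0, w4]]"

definition contraction :: "complex ^ 4 ^ 4 \<Rightarrow> bool" where
  "contraction T \<longleftrightarrow> onorm (\<lambda>x. T *v x) \<le> 1"

end

theory Submission
  imports Defs
begin

text \<open>
  \<open>T\<close> is a contraction iff its adjoint is, i.e. iff \<open>\<parallel>T\<^sup>* y\<parallel>\<^sup>2 \<le> \<parallel>y\<parallel>\<^sup>2\<close> for all \<open>y\<close>.
  Only the last coordinate of \<open>T\<^sup>* y\<close> involves \<open>y\<^sub>3, y\<^sub>4\<close>, and it does so affinely; the
  worst case over \<open>(y\<^sub>3, y\<^sub>4)\<close> leaves, for each \<open>(y\<^sub>1, y\<^sub>2)\<close>, a 2x2 positivity condition.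
  Altogether this says that a 3x3 Hermitian matrix with diagonal
  \<open>(\<delta>\<^sub>1 - |\<alpha>\<^sub>1|\<^sup>2 - |\<beta>\<^sub>1|\<^sup>2, D, e)\<close> is positive semidefinite, written as a Schur
  complement at the pivot \<open>e = \<delta>\<^sub>4 - |\<alpha>\<^sub>3|\<^sup>2\<close>.
  Pivoting instead at \<open>D = \<delta>\<^sub>2 - |\<alpha>\<^sub>2|\<^sup>2\<close> gives the stated conditions: \<open>D = 0\<close> is case (A),
  \<open>D > 0\<close> is case (B), and \<open>D < 0\<close> is impossible.
\<close>

section \<open>Conjugate transpose and contractions\<close>

definition cadj :: "complex^'n^'m \<Rightarrow> complex^'m^'n" where
  "cadj A = (\<chi> i j. cnj (A$j$i))"

lemma inner_complex_Re_cnj: "inner z w = Re (z * cnj w)"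
  by (simp add: inner_complex_def)

lemma inner_cadj: "inner (A *v x) y = inner x (cadj A *v y)"
proof -
  have "inner (A *v x) y = Re (\<Sum>i\<in>UNIV. \<Sum>j\<in>UNIV. A$i$j * x$j * cnj (y$i))"
    by (simp add: inner_vec_def matrix_vector_mult_def inner_complex_Re_cnj sum_distrib_right Re_sum)
  also have "\<dots> = Re (\<Sum>j\<in>UNIV. \<Sum>i\<in>UNIV. A$i$j * x$j * cnj (y$i))"
    by (subst sum.swap) simp
  also have "\<dots> = inner x (cadj A *v y)"
    by (simp add: inner_vec_def matrix_vector_mult_def inner_complex_Re_cnj cadj_def
        sum_distrib_left Re_sum mult_ac)
  finally show ?thesis .
qed

lemma cadj_cadj [simp]: "cadj (cadj A) = A"
  by (simp add: cadj_def vec_eq_iff)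

lemma norm_cadj_mult_le:
  assumes "\<And>x. norm (A *v x) \<le> norm x"
  shows "norm (cadj A *v y) \<le> norm y"
proof -
  let ?z = "cadj A *v y"
  have "norm ?z ^ 2 = inner (A *v ?z) y"
    by (simp add: power2_norm_eq_inner inner_cadj)
  also have "\<dots> \<le> norm (A *v ?z) * norm y"
    by (rule norm_cauchy_schwarz)
  also have "\<dots> \<le> norm ?z * norm y"
    using assms by (simp add: mult_right_mono)
  finally show ?thesis
    by (cases "?z = 0") (auto simp: power2_eq_square)
qed

lemma contractive_cadj_iff:
  "(\<forall>x. norm (A *v x) \<le> norm x) \<longleftrightarrow> (\<forall>y. norm (cadj A *v y) \<le> norm y)"
  by (metis cadj_cadj norm_cadj_mult_le)

lemma onorm_le_one_iff:
  fixes f :: "'a::{real_normed_vector, perfect_space} \<Rightarrow> 'b::real_normed_vector"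
  assumes "bounded_linear f"
  shows "onorm f \<le> 1 \<longleftrightarrow> (\<forall>x. norm (f x) \<le> norm x)"
proof (intro iffI allI)
  fix x
  assume "onorm f \<le> 1"
  have "norm (f x) \<le> onorm f * norm x"
    by (rule onorm[OF assms])
  also have "\<dots> \<le> norm x"
    using \<open>onorm f \<le> 1\<close> mult_right_mono[of "onorm f" 1 "norm x"] by simp
  finally show "norm (f x) \<le> norm x" .
qed (rule onorm_le, simp)

section \<open>Positive semidefinite 2x2 Hermitian matrices\<close>

(* positive semidefiniteness of the Hermitian matrix [[A, B], [cnj B, C]] *)
definition psd2 :: "real \<Rightarrow> complex \<Rightarrow> real \<Rightarrow> bool" where
  "psd2 A B C \<longleftrightarrow> 0 \<le> A \<and> 0 \<le> C \<and> (cmod B)\<^sup>2 \<le> A * C"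

definition herm_form2 :: "real \<Rightarrow> complex \<Rightarrow> real \<Rightarrow> complex \<Rightarrow> complex \<Rightarrow> real" where
  "herm_form2 A B C y1 y2 = A * (cmod y1)\<^sup>2 + C * (cmod y2)\<^sup>2 + 2 * Re (B * cnj y1 * y2)"

lemma herm_form2_complete_square:
  "A * herm_form2 A B C y1 y2 = (cmod (A * y1 + B * y2))\<^sup>2 + (A * C - (cmod B)\<^sup>2) * (cmod y2)\<^sup>2"
  unfolding herm_form2_def cmod_power2 by (simp add: algebra_simps power2_eq_square)

lemma psd2_iff_herm_form2_nonneg:
  "psd2 A B C \<longleftrightarrow> (\<forall>y1 y2. 0 \<le> herm_form2 A B C y1 y2)"
proof
  assume psd: "psd2 A B C"
  show "\<forall>y1 y2. 0 \<le> herm_form2 A B C y1 y2"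
  proof (intro allI)
    fix y1 y2
    show "0 \<le> herm_form2 A B C y1 y2"
    proof (cases "A = 0")
      case True
      then show ?thesis using psd by (simp add: psd2_def herm_form2_def)
    next
      case False
      then have "0 < A" using psd by (simp add: psd2_def)
      moreover have "0 \<le> A * herm_form2 A B C y1 y2"
        using psd by (simp add: herm_form2_complete_square psd2_def)
      ultimately show ?thesis by (simp add: zero_le_mult_iff)
    qed
  qed
next
  assume nonneg: "\<forall>y1 y2. 0 \<le> herm_form2 A B C y1 y2"
  have A: "0 \<le> A" and C: "0 \<le> C"
    using nonneg[rule_format, of 1 0] nonneg[rule_format, of 0 1] by (simp_all add: herm_form2_def)
  have test: "0 \<le> A * (cmod B)\<^sup>2 - 2 * t * (cmod B)\<^sup>2 + C * t\<^sup>2" for t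
    using nonneg[rule_format, of "- B" "of_real t"]
    by (simp add: herm_form2_def complex_norm_square[symmetric] power2_eq_square algebra_simps)
  have "(cmod B)\<^sup>2 \<le> A * C"
  proof (cases "A = 0")
    case True
    show ?thesis
    proof (rule ccontr)
      assume "\<not> ?thesis"
      then have b: "0 < (cmod B)\<^sup>2" using True by simp
      define t where "t = (cmod B)\<^sup>2 / (C + 1)"
      have t: "0 < t" using b C by (simp add: t_def)
      have "(C + 1) * t = (cmod B)\<^sup>2"
        using C by (simp add: t_def)
      then have "C * t + t = (cmod B)\<^sup>2"
        by (simp add: algebra_simps)
      then have "C * t - 2 * (cmod B)\<^sup>2 < 0"
        using b t by linarith
      with t have "t * (C * t - 2 * (cmod B)\<^sup>2) < 0"
        by (rule mult_pos_neg)
      moreover have "0 \<le> t * (C * t - 2 * (cmod B)\<^sup>2)"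
        using test[of t] True by (simp add: algebra_simps power2_eq_square)
      ultimately show False by simp
    qed
  next
    case False
    have "0 \<le> A * (A * C - (cmod B)\<^sup>2)"
      using test[of A] by (simp add: algebra_simps power2_eq_square)
    then show ?thesis using A False by (simp add: zero_le_mult_iff)
  qed
  then show "psd2 A B C" using A C by (simp add: psd2_def)
qed

lemma psd2_pos_right_iff:
  assumes "0 < C"
  shows "psd2 A B C \<longleftrightarrow> (cmod B)\<^sup>2 \<le> A * C"
proof
  assume "(cmod B)\<^sup>2 \<le> A * C"
  then have "0 \<le> A * C" by (meson order_trans zero_le_power2)
  then show "psd2 A B C"
    using assms \<open>(cmod B)\<^sup>2 \<le> A * C\<close> by (simp add: psd2_def zero_le_mult_iff)
qed (simp add: psd2_def)

lemma psd2_iff_scaled: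
  assumes "0 < c"
  shows "psd2 A B C \<longleftrightarrow> 0 \<le> c * A \<and> 0 \<le> C \<and> (cmod B)\<^sup>2 * c \<le> (c * A) * C"
proof -
  have "(cmod B)\<^sup>2 * c \<le> (c * A) * C \<longleftrightarrow> (cmod B)\<^sup>2 \<le> A * C"
    using mult_le_cancel_right_pos[OF assms, of "(cmod B)\<^sup>2" "A * C"] by (simp add: ac_simps)
  then show ?thesis
    using assms by (simp add: psd2_def zero_le_mult_iff)
qed

section \<open>Eliminating an affine row\<close>

lemma Cauchy_Schwarz_ineq_real2: "(p * q + r * s)\<^sup>2 \<le> (p\<^sup>2 + r\<^sup>2) * (q\<^sup>2 + s\<^sup>2)"
  for p q r s :: real
proof -
  have "(p * q + r * s)\<^sup>2 + (p * s - r * q)\<^sup>2 = (p\<^sup>2 + r\<^sup>2) * (q\<^sup>2 + s\<^sup>2)"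
    by algebra
  then show ?thesis by (metis le_add_same_cancel1 zero_le_power2)
qed

lemma power2_cmod_linear2_le:
  "(cmod (c1 * v1 + c2 * v2))\<^sup>2 \<le> ((cmod c1)\<^sup>2 + (cmod c2)\<^sup>2) * ((cmod v1)\<^sup>2 + (cmod v2)\<^sup>2)"
proof -
  have "cmod (c1 * v1 + c2 * v2) \<le> cmod c1 * cmod v1 + cmod c2 * cmod v2"
    by (metis norm_mult norm_triangle_ineq)
  then have "(cmod (c1 * v1 + c2 * v2))\<^sup>2 \<le> (cmod c1 * cmod v1 + cmod c2 * cmod v2)\<^sup>2"
    by (simp add: power_mono)
  also have "\<dots> \<le> ((cmod c1)\<^sup>2 + (cmod c2)\<^sup>2) * ((cmod v1)\<^sup>2 + (cmod v2)\<^sup>2)"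
    by (rule Cauchy_Schwarz_ineq_real2)
  finally show ?thesis .
qed

lemma power2_add_le_of_power2_le:
  fixes x y e k P V :: real
  assumes "0 \<le> e" "0 \<le> k" "0 \<le> P" "0 \<le> V" "0 \<le> x" "0 \<le> y"
    and "x\<^sup>2 \<le> e * P" "y\<^sup>2 \<le> k * V"
  shows "(x + y)\<^sup>2 \<le> (e + k) * (P + V)"
proof -
  have "x \<le> sqrt e * sqrt P" "y \<le> sqrt k * sqrt V"
    using assms by (simp_all add: real_le_rsqrt flip: real_sqrt_mult)
  then have "(x + y)\<^sup>2 \<le> (sqrt e * sqrt P + sqrt k * sqrt V)\<^sup>2"
    using assms by (intro power_mono) auto
  also have "\<dots> \<le> ((sqrt e)\<^sup>2 + (sqrt k)\<^sup>2) * ((sqrt P)\<^sup>2 + (sqrt V)\<^sup>2)"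
    by (rule Cauchy_Schwarz_ineq_real2)
  finally show ?thesis using assms by simp
qed

lemma quadratic_bound_imp_coeffs:
  fixes a k P :: real
  assumes "0 \<le> a" "0 \<le> k" and bound: "\<And>x. 0 \<le> x \<Longrightarrow> (a + k * x)\<^sup>2 \<le> k * x\<^sup>2 + P"
  shows "k \<le> 1 \<and> 0 \<le> P \<and> a\<^sup>2 \<le> (1 - k) * P"
proof -
  have expand: "a\<^sup>2 + 2 * a * k * x + k * (k - 1) * x\<^sup>2 \<le> P" if "0 \<le> x" for x
    using bound[OF that] by (simp add: power2_eq_square algebra_simps)
  have "a\<^sup>2 \<le> P" using expand[of 0] by simp
  then have P: "0 \<le> P" by (meson order_trans zero_le_power2)
  have k: "k \<le> 1"
  proof (rule ccontr)
    assume "\<not> k \<le> 1"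
    define m where "m = k * (k - 1)"
    have m: "0 < m" using \<open>\<not> k \<le> 1\<close> assms(2) by (simp add: m_def)
    define x where "x = (P + 1) / m + 1"
    have x: "1 \<le> x" using m P by (simp add: x_def)
    have "m * x = P + 1 + m"
      unfolding x_def using m by (simp add: field_simps)
    then have "P + 1 \<le> m * x"
      using m by simp
    also have "\<dots> \<le> m * x\<^sup>2"
      using m x by (simp add: power2_eq_square)
    also have "\<dots> \<le> P"
    proof -
      have "0 \<le> a\<^sup>2 + 2 * a * k * x" using x assms(1,2) by simp
      then show ?thesis using expand[of x] x unfolding m_def by linarith
    qed
    finally show False by simp
  qed
  have "a\<^sup>2 \<le> (1 - k) * P"
  proof (cases "k = 1")
    case True
    show ?thesis
    proof (cases "a = 0")
      case False
      then have "a\<^sup>2 + 2 * a * (P / (2 * a)) \<le> P"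
        using expand[of "P / (2 * a)"] True assms(1) P by simp
      then show ?thesis using False True by simp
    qed (use True in simp)
  next
    case False
    define q where "q = 1 - k"
    have q: "0 < q" and kq: "k = 1 - q"
      using k False by (simp_all add: q_def)
    have "a\<^sup>2 / q = a\<^sup>2 + 2 * a * k * (a / q) + k * (k - 1) * (a / q)\<^sup>2"
      unfolding kq using q by (simp add: field_simps power2_eq_square)
    also have "\<dots> \<le> P"
      using expand[of "a / q"] q assms(1) by simp
    finally show ?thesis using q by (simp add: q_def field_simps mult.commute)
  qed
  with k P show ?thesis by simp
qed

lemma affine_row_bound_iff_psd2:
  fixes u c1 c2 :: complex and P :: real
  shows "(\<forall>v1 v2. (cmod (u + c1 * v1 + c2 * v2))\<^sup>2 \<le> (cmod v1)\<^sup>2 + (cmod v2)\<^sup>2 + P)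
    \<longleftrightarrow> psd2 (1 - (cmod c1)\<^sup>2 - (cmod c2)\<^sup>2) u P"
proof
  assume bound: "\<forall>v1 v2. (cmod (u + c1 * v1 + c2 * v2))\<^sup>2 \<le> (cmod v1)\<^sup>2 + (cmod v2)\<^sup>2 + P"
  define k where "k = (cmod c1)\<^sup>2 + (cmod c2)\<^sup>2"
  define s where "s = cis (Arg u)"
  have u: "u = of_real (cmod u) * s"
    unfolding s_def by (metis rcis_cmod_Arg rcis_def)
  \<comment> \<open>\<open>v = x s cnj c\<close> aligns \<open>c1 v1 + c2 v2\<close> with \<open>u = \<bar>u\<bar> s\<close>\<close>
  have "(cmod u + k * x)\<^sup>2 \<le> k * x\<^sup>2 + P" if "0 \<le> x" for x
  proof -
    let ?v1 = "cnj c1 * of_real x * s" and ?v2 = "cnj c2 * of_real x * s"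
    have "c1 * ?v1 + c2 * ?v2 = (c1 * cnj c1 + c2 * cnj c2) * of_real x * s"
      by (simp add: algebra_simps)
    also have "\<dots> = of_real (k * x) * s"
      by (simp add: k_def flip: complex_norm_square)
    finally have "u + c1 * ?v1 + c2 * ?v2 = of_real (cmod u + k * x) * s"
      by (subst u) (simp add: algebra_simps)
    moreover have "cmod (of_real (cmod u + k * x) * s) = cmod u + k * x"
      using that
      by (simp only: norm_mult norm_of_real s_def norm_cis mult_1_right) (simp add: k_def)
    moreover have "(cmod ?v1)\<^sup>2 + (cmod ?v2)\<^sup>2 = k * x\<^sup>2"
      by (simp add: k_def s_def norm_mult power_mult_distrib algebra_simps)
    moreover have "(cmod (u + c1 * ?v1 + c2 * ?v2))\<^sup>2 \<le> (cmod ?v1)\<^sup>2 + (cmod ?v2)\<^sup>2 + P"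
      using bound by blast
    ultimately show ?thesis by simp
  qed
  then have "k \<le> 1 \<and> 0 \<le> P \<and> (cmod u)\<^sup>2 \<le> (1 - k) * P"
    by (intro quadratic_bound_imp_coeffs) (simp_all add: k_def)
  then show "psd2 (1 - (cmod c1)\<^sup>2 - (cmod c2)\<^sup>2) u P"
    by (simp add: psd2_def k_def algebra_simps)
next
  assume psd: "psd2 (1 - (cmod c1)\<^sup>2 - (cmod c2)\<^sup>2) u P"
  define e where "e = 1 - (cmod c1)\<^sup>2 - (cmod c2)\<^sup>2"
  define k where "k = (cmod c1)\<^sup>2 + (cmod c2)\<^sup>2"
  from psd have e: "0 \<le> e" and P: "0 \<le> P" and u: "(cmod u)\<^sup>2 \<le> e * P"
    by (simp_all add: psd2_def e_def mult.commute)
  show "\<forall>v1 v2. (cmod (u + c1 * v1 + c2 * v2))\<^sup>2 \<le> (cmod v1)\<^sup>2 + (cmod v2)\<^sup>2 + P"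
  proof (intro allI)
    fix v1 v2
    define V where "V = (cmod v1)\<^sup>2 + (cmod v2)\<^sup>2"
    have "cmod (u + c1 * v1 + c2 * v2) \<le> cmod u + cmod (c1 * v1 + c2 * v2)"
      using norm_triangle_ineq[of u "c1 * v1 + c2 * v2"] by (simp add: add.assoc)
    then have "(cmod (u + c1 * v1 + c2 * v2))\<^sup>2 \<le> (cmod u + cmod (c1 * v1 + c2 * v2))\<^sup>2"
      by (simp add: power_mono)
    also have "\<dots> \<le> (e + k) * (P + V)"
    proof (rule power2_add_le_of_power2_le)
      show "(cmod (c1 * v1 + c2 * v2))\<^sup>2 \<le> k * V"
        unfolding k_def V_def by (rule power2_cmod_linear2_le)
    qed (use e P u in \<open>simp_all add: k_def V_def\<close>)
    also have "\<dots> = V + P"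
      by (simp add: e_def k_def)
    finally show "(cmod (u + c1 * v1 + c2 * v2))\<^sup>2 \<le> (cmod v1)\<^sup>2 + (cmod v2)\<^sup>2 + P"
      by (simp add: V_def)
  qed
qed

section \<open>Schur complements\<close>

lemma schur_complement_identity:
  fixes e A D :: real and B g b :: complex
  shows "D * ((e * A - (cmod g)\<^sup>2) * (e * D - (cmod b)\<^sup>2) - (cmod (of_real e * B - g * cnj b))\<^sup>2)
    = e * ((A * D - (cmod B)\<^sup>2) * (e * D - (cmod b)\<^sup>2) - (cmod (g * of_real D - b * B))\<^sup>2)"
  unfolding cmod_power2 by (simp add: algebra_simps power2_eq_square)

text \<open>Both sides are Schur complement criteria for the positive semidefiniteness of one
  3x3 Hermitian matrix with diagonal \<open>(A, D, e)\<close>, pivoting at \<open>e\<close> and at \<open>D\<close> respectively.\<close>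
lemma psd2_schur_pos_pivot:
  fixes e A D :: real and B g b :: complex
  assumes D: "0 < D"
  shows "(0 \<le> e \<and> psd2 A B D \<and>
      psd2 (e * A - (cmod g)\<^sup>2) (of_real e * B - g * cnj b) (e * D - (cmod b)\<^sup>2))
    \<longleftrightarrow> psd2 (A * D - (cmod B)\<^sup>2) (g * of_real D - b * B) (e * D - (cmod b)\<^sup>2)"
    (is "0 \<le> e \<and> psd2 A B D \<and> psd2 ?A' ?B' ?C \<longleftrightarrow> psd2 ?A'' ?X ?C")
proof
  assume lhs: "0 \<le> e \<and> psd2 A B D \<and> psd2 ?A' ?B' ?C"
  have "(cmod ?X)\<^sup>2 \<le> ?A'' * ?C"
  proof (cases "e = 0")
    case True
    then have "b = 0" and "g = 0" using lhs by (simp_all add: psd2_def)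
    then show ?thesis using lhs by (simp add: psd2_def)
  next
    case False
    then have "0 < e" using lhs by simp
    moreover have "0 \<le> e * (?A'' * ?C - (cmod ?X)\<^sup>2)"
      using lhs D by (simp add: psd2_def flip: schur_complement_identity)
    ultimately show ?thesis by (simp add: zero_le_mult_iff)
  qed
  then show "psd2 ?A'' ?X ?C" using lhs by (simp add: psd2_def)
next
  assume rhs: "psd2 ?A'' ?X ?C"
  have "0 \<le> e * D"
    using rhs by (simp add: psd2_def) (meson order_trans zero_le_power2)
  then have e: "0 \<le> e"
    using D by (simp add: zero_le_mult_iff)
  have ABD: "psd2 A B D"
    unfolding psd2_pos_right_iff[OF D] using rhs by (simp add: psd2_def)
  have "0 \<le> D * (?A' * ?C - (cmod ?B')\<^sup>2)"
    using rhs e by (simp add: psd2_def schur_complement_identity)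
  then have B': "(cmod ?B')\<^sup>2 \<le> ?A' * ?C"
    using D by (simp add: zero_le_mult_iff)
  have "psd2 ?A' ?B' ?C"
  proof (cases "?C = 0")
    case False
    then have "0 < ?C" using rhs by (simp add: psd2_def)
    then show ?thesis using B' by (simp add: psd2_pos_right_iff)
  next
    case True
    then have "g * of_real D = b * B" and b: "(cmod b)\<^sup>2 = e * D"
      using rhs by (simp_all add: psd2_def)
    then have "(cmod g)\<^sup>2 * D\<^sup>2 = e * D * (cmod B)\<^sup>2"
      by (metis norm_mult norm_of_real power_mult_distrib power2_abs)
    then have "(cmod g)\<^sup>2 * D = e * (cmod B)\<^sup>2"
      using D by (simp add: power2_eq_square)
    then have "D * ?A' = e * ?A''"
      by (simp add: algebra_simps)
    moreover have "0 \<le> e * ?A''"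
      using rhs e by (simp add: psd2_def)
    ultimately have "0 \<le> D * ?A'"
      by simp
    then have "0 \<le> ?A'"
      using D zero_le_mult_iff[of D ?A'] by linarith
    then show ?thesis using True B' by (simp add: psd2_def)
  qed
  with e ABD show "0 \<le> e \<and> psd2 A B D \<and> psd2 ?A' ?B' ?C" by simp
qed

lemma psd2_schur_zero_pivot:
  fixes e A :: real and B g b :: complex
  shows "(0 \<le> e \<and> psd2 A B 0 \<and>
      psd2 (e * A - (cmod g)\<^sup>2) (of_real e * B - g * cnj b) (- (cmod b)\<^sup>2))
    \<longleftrightarrow> B = 0 \<and> b = 0 \<and> psd2 A g e"
  by (auto simp: psd2_def mult.commute)

section \<open>The matrix T\<close>

lemma vector_4 [simp]:
  "(vector [x, y, z, w] :: 'a::zero^4) $ 1 = x"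
  "(vector [x, y, z, w] :: 'a::zero^4) $ 2 = y"
  "(vector [x, y, z, w] :: 'a::zero^4) $ 3 = z"
  "(vector [x, y, z, w] :: 'a::zero^4) $ 4 = w"
  unfolding vector_def by simp_all

lemma forall_vector_4:
  "(\<forall>v::'a::zero^4. P v) \<longleftrightarrow> (\<forall>x y z w. P (vector [x, y, z, w]))"
proof -
  have "P v" if "\<And>x y z w. P (vector [x, y, z, w])" for v
  proof -
    have "vector [v$1, v$2, v$3, v$4] = v"
      unfolding vec_eq_iff by (metis (mono_tags) exhaust_4 vector_4)
    then show ?thesis
      by (metis that)
  qed
  then show ?thesis by auto
qed

lemma power2_norm_vec4:
  "(norm (x::complex^4))\<^sup>2 = (cmod (x$1))\<^sup>2 + (cmod (x$2))\<^sup>2 + (cmod (x$3))\<^sup>2 + (cmod (x$4))\<^sup>2"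
  unfolding norm_vec_def L2_set_def by (simp add: sum_4 sum_nonneg)

lemma Tmat_rows:
  "Tmat w1 w2 w4 a1 a2 a3 b1 b2 g $ 1 = vector [w1, a1, b1, g]"
  "Tmat w1 w2 w4 a1 a2 a3 b1 b2 g $ 2 = vector [0, w2, a2, b2]"
  "Tmat w1 w2 w4 a1 a2 a3 b1 b2 g $ 3 = vector [0, 0, 0, a3]"
  "Tmat w1 w2 w4 a1 a2 a3 b1 b2 g $ 4 = vector [0, 0, 0, w4]"
  unfolding Tmat_def by (simp_all only: vector_4)

lemma cadj_Tmat_mult:
  "cadj (Tmat w1 w2 w4 a1 a2 a3 b1 b2 g) *v y =
     vector [cnj w1 * y$1, cnj a1 * y$1 + cnj w2 * y$2, cnj b1 * y$1 + cnj a2 * y$2,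
             cnj g * y$1 + cnj b2 * y$2 + cnj a3 * y$3 + cnj w4 * y$4]"
  unfolding vec_eq_iff forall_4 matrix_vector_mult_def cadj_def sum_4
  by (simp add: Tmat_rows)

lemma contraction_Tmat_iff:
  "contraction (Tmat w1 w2 w4 a1 a2 a3 b1 b2 g) \<longleftrightarrow>
   (\<forall>y1 y2 y3 y4.
      (cmod (cnj w1 * y1))\<^sup>2 + (cmod (cnj a1 * y1 + cnj w2 * y2))\<^sup>2
        + (cmod (cnj b1 * y1 + cnj a2 * y2))\<^sup>2
        + (cmod (cnj g * y1 + cnj b2 * y2 + cnj a3 * y3 + cnj w4 * y4))\<^sup>2
      \<le> (cmod y1)\<^sup>2 + (cmod y2)\<^sup>2 + (cmod y3)\<^sup>2 + (cmod y4)\<^sup>2)"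
  (is "_ \<longleftrightarrow> ?rhs")
proof -
  let ?T = "Tmat w1 w2 w4 a1 a2 a3 b1 b2 g"
  have "contraction ?T \<longleftrightarrow> (\<forall>y. norm (cadj ?T *v y) \<le> norm y)"
    unfolding contraction_def onorm_le_one_iff[OF matrix_vector_mul_bounded_linear]
    by (rule contractive_cadj_iff)
  also have "\<dots> \<longleftrightarrow> (\<forall>y. (norm (cadj ?T *v y))\<^sup>2 \<le> (norm y)\<^sup>2)"
    by (simp only: abs_le_square_iff[symmetric] abs_norm_cancel)
  also have "\<dots> \<longleftrightarrow> ?rhs"
    by (simp only: forall_vector_4 cadj_Tmat_mult power2_norm_vec4 vector_4)
  finally show ?thesis .
qed

lemma contraction_Tmat_iff_psd2:
  fixes w1 w2 w4 a1 a2 a3 b1 b2 g :: complex and d1 d2 d4 :: real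
  assumes "d1 = 1 - (cmod w1)\<^sup>2" and "d2 = 1 - (cmod w2)\<^sup>2" and "d4 = 1 - (cmod w4)\<^sup>2"
  defines "A \<equiv> d1 - (cmod a1)\<^sup>2 - (cmod b1)\<^sup>2" and "B \<equiv> - (a1 * cnj w2 + b1 * cnj a2)"
    and "D \<equiv> d2 - (cmod a2)\<^sup>2" and "e \<equiv> d4 - (cmod a3)\<^sup>2"
  shows "contraction (Tmat w1 w2 w4 a1 a2 a3 b1 b2 g) \<longleftrightarrow>
    0 \<le> e \<and> psd2 A B D \<and>
    psd2 (e * A - (cmod g)\<^sup>2) (of_real e * B - g * cnj b2) (e * D - (cmod b2)\<^sup>2)"
proof -
  have first_rows: "(cmod y1)\<^sup>2 + (cmod y2)\<^sup>2 - (cmod (cnj w1 * y1))\<^sup>2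
      - (cmod (cnj a1 * y1 + cnj w2 * y2))\<^sup>2 - (cmod (cnj b1 * y1 + cnj a2 * y2))\<^sup>2
      = herm_form2 A B D y1 y2" for y1 y2
    unfolding herm_form2_def A_def B_def D_def assms cmod_power2
    by (simp add: algebra_simps power2_eq_square)
  have last_row: "e * herm_form2 A B D y1 y2 - (cmod (cnj g * y1 + cnj b2 * y2))\<^sup>2
      = herm_form2 (e * A - (cmod g)\<^sup>2) (of_real e * B - g * cnj b2) (e * D - (cmod b2)\<^sup>2) y1 y2"
    for y1 y2
    unfolding herm_form2_def cmod_power2 by (simp add: algebra_simps power2_eq_square)
  have e: "1 - (cmod (cnj a3))\<^sup>2 - (cmod (cnj w4))\<^sup>2 = e"
    by (simp add: e_def assms)
  have "contraction (Tmat w1 w2 w4 a1 a2 a3 b1 b2 g) \<longleftrightarrow>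
      (\<forall>y1 y2 y3 y4. (cmod ((cnj g * y1 + cnj b2 * y2) + cnj a3 * y3 + cnj w4 * y4))\<^sup>2
         \<le> (cmod y3)\<^sup>2 + (cmod y4)\<^sup>2 + herm_form2 A B D y1 y2)"
    unfolding contraction_Tmat_iff first_rows[symmetric] by (intro iff_allI) linarith
  also have "\<dots> \<longleftrightarrow> (\<forall>y1 y2. psd2 e (cnj g * y1 + cnj b2 * y2) (herm_form2 A B D y1 y2))"
    by (simp only: affine_row_bound_iff_psd2 e)
  also have "\<dots> \<longleftrightarrow> 0 \<le> e \<and> (\<forall>y1 y2. 0 \<le> herm_form2 A B D y1 y2) \<and>
      (\<forall>y1 y2. 0 \<le> e * herm_form2 A B D y1 y2 - (cmod (cnj g * y1 + cnj b2 * y2))\<^sup>2)"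
    unfolding psd2_def by auto
  also have "\<dots> \<longleftrightarrow> 0 \<le> e \<and> psd2 A B D \<and>
      psd2 (e * A - (cmod g)\<^sup>2) (of_real e * B - g * cnj b2) (e * D - (cmod b2)\<^sup>2)"
    unfolding last_row psd2_iff_herm_form2_nonneg ..
  finally show ?thesis .
qed

lemma Tmat_boundary_case_iff:
  fixes w2 a1 a2 a3 b1 b2 g :: complex and d1 d2 d4 :: real
  assumes d2: "d2 = 1 - (cmod w2)\<^sup>2" and d2_pos: "0 < d2" and a2: "(norm a2)\<^sup>2 = d2"
  shows "(- (a1 * cnj w2 + b1 * cnj a2) = 0 \<and> b2 = 0 \<and>
      psd2 (d1 - (cmod a1)\<^sup>2 - (cmod b1)\<^sup>2) g (d4 - (cmod a3)\<^sup>2))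
    \<longleftrightarrow> ((norm a1)\<^sup>2 \<le> d1 * d2 \<and> (norm a3)\<^sup>2 \<le> d4 \<and> (norm a2)\<^sup>2 = d2 \<and>
      b1 = - (a1 * a2 * cnj w2) / complex_of_real d2 \<and> b2 = 0 \<and>
      (norm g)\<^sup>2 * d2 \<le> (d1 * d2 - (norm a1)\<^sup>2) * (d4 - (norm a3)\<^sup>2))"
proof -
  have a2_cnj: "a2 * cnj a2 = of_real d2"
    using a2 by (metis complex_norm_square)
  have "a2 \<noteq> 0" using a2 d2_pos by auto
  then have "- (a1 * cnj w2 + b1 * cnj a2) = 0 \<longleftrightarrow> a2 * (a1 * cnj w2 + b1 * cnj a2) = 0"
    by (metis mult_eq_0_iff neg_equal_0_iff_equal)
  also have "a2 * (a1 * cnj w2 + b1 * cnj a2) = a1 * a2 * cnj w2 + b1 * (a2 * cnj a2)"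
    by (simp add: algebra_simps)
  finally have "- (a1 * cnj w2 + b1 * cnj a2) = 0 \<longleftrightarrow> b1 * of_real d2 + a1 * a2 * cnj w2 = 0"
    by (simp add: a2_cnj add.commute)
  moreover have d2_nz: "complex_of_real d2 \<noteq> 0" using d2_pos by simp
  then have "b1 = - (a1 * a2 * cnj w2) / of_real d2 \<longleftrightarrow> b1 * of_real d2 + a1 * a2 * cnj w2 = 0"
    unfolding nonzero_eq_divide_eq[OF d2_nz] by (simp only: eq_neg_iff_add_eq_0)
  ultimately have B_iff:
    "- (a1 * cnj w2 + b1 * cnj a2) = 0 \<longleftrightarrow> b1 = - (a1 * a2 * cnj w2) / of_real d2"
    by blast
  show ?thesis
  proof (cases "b1 = - (a1 * a2 * cnj w2) / of_real d2")
    case True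
    then have "cmod b1 * d2 = cmod a1 * cmod a2 * cmod w2"
      using d2_pos by (simp add: norm_divide norm_mult)
    then have "(cmod b1)\<^sup>2 * d2\<^sup>2 = (cmod a1)\<^sup>2 * (cmod a2)\<^sup>2 * (cmod w2)\<^sup>2"
      by (metis power_mult_distrib)
    also have "\<dots> = (cmod a1)\<^sup>2 * d2 * (1 - d2)"
      using a2 d2 by simp
    finally have "(cmod b1)\<^sup>2 * d2\<^sup>2 = (cmod a1)\<^sup>2 * d2 * (1 - d2)" .
    then have "(cmod b1)\<^sup>2 * d2 = (cmod a1)\<^sup>2 * (1 - d2)"
      using d2_pos by (simp add: power2_eq_square)
    then have "d2 * (d1 - (cmod a1)\<^sup>2 - (cmod b1)\<^sup>2) = d1 * d2 - (cmod a1)\<^sup>2"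
      by (simp add: algebra_simps)
    then have "psd2 (d1 - (cmod a1)\<^sup>2 - (cmod b1)\<^sup>2) g (d4 - (cmod a3)\<^sup>2) \<longleftrightarrow>
        0 \<le> d1 * d2 - (cmod a1)\<^sup>2 \<and> 0 \<le> d4 - (cmod a3)\<^sup>2 \<and>
        (cmod g)\<^sup>2 * d2 \<le> (d1 * d2 - (cmod a1)\<^sup>2) * (d4 - (cmod a3)\<^sup>2)"
      by (simp only: psd2_iff_scaled[OF d2_pos])
    then show ?thesis using True B_iff a2 by auto
  qed (use B_iff in simp)
qed

lemma Tmat_interior_case_iff:
  fixes w2 a1 a2 a3 b1 b2 g :: complex and d1 d2 d4 :: real
  assumes d2: "d2 = 1 - (cmod w2)\<^sup>2" and a2: "(norm a2)\<^sup>2 < d2"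
  defines "A \<equiv> d1 - (cmod a1)\<^sup>2 - (cmod b1)\<^sup>2" and "B \<equiv> - (a1 * cnj w2 + b1 * cnj a2)"
    and "D \<equiv> d2 - (cmod a2)\<^sup>2" and "e \<equiv> d4 - (cmod a3)\<^sup>2"
  shows "psd2 (A * D - (cmod B)\<^sup>2) (g * of_real D - b2 * B) (e * D - (cmod b2)\<^sup>2) \<longleftrightarrow>
    ((norm a1)\<^sup>2 \<le> d1 * d2 \<and> (norm a3)\<^sup>2 \<le> d4 \<and> (norm a2)\<^sup>2 < d2 \<and>
      (norm (b1 * complex_of_real d2 + a1 * a2 * cnj w2))\<^sup>2
         \<le> (d1 * d2 - (norm a1)\<^sup>2) * (d2 - (norm a2)\<^sup>2) \<and>
      (norm b2)\<^sup>2 \<le> (d2 - (norm a2)\<^sup>2) * (d4 - (norm a3)\<^sup>2) \<and>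
      (norm (g * complex_of_real (d2 - (norm a2)\<^sup>2) + b2 * (cnj w2 * a1 + cnj a2 * b1)))\<^sup>2 * d2
         \<le> ((d1 * d2 - (norm a1)\<^sup>2) * (d2 - (norm a2)\<^sup>2)
               - (norm (b1 * complex_of_real d2 + a1 * a2 * cnj w2))\<^sup>2)
           * ((d2 - (norm a2)\<^sup>2) * (d4 - (norm a3)\<^sup>2) - (norm b2)\<^sup>2))"
proof -
  have d2_pos: "0 < d2"
    using a2 by (meson le_less_trans zero_le_power2)
  have D: "0 < D"
    using a2 by (simp add: D_def)
  have reduced: "d2 * (A * D - (cmod B)\<^sup>2) = (d1 * d2 - (norm a1)\<^sup>2) * (d2 - (norm a2)\<^sup>2)
      - (norm (b1 * complex_of_real d2 + a1 * a2 * cnj w2))\<^sup>2"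
    unfolding A_def B_def D_def d2 cmod_power2 by (simp add: algebra_simps power2_eq_square)
  have X: "g * of_real D - b2 * B
      = g * complex_of_real (d2 - (norm a2)\<^sup>2) + b2 * (cnj w2 * a1 + cnj a2 * b1)"
    by (simp add: D_def B_def algebra_simps)
  have a1: "(norm a1)\<^sup>2 \<le> d1 * d2"
    if "(norm (b1 * complex_of_real d2 + a1 * a2 * cnj w2))\<^sup>2
         \<le> (d1 * d2 - (norm a1)\<^sup>2) * (d2 - (norm a2)\<^sup>2)"
  proof -
    have "0 \<le> (d1 * d2 - (norm a1)\<^sup>2) * D"
      using that unfolding D_def by (meson order_trans zero_le_power2)
    then show ?thesis using D by (simp add: zero_le_mult_iff)
  qed
  have a3: "(norm a3)\<^sup>2 \<le> d4" if "(norm b2)\<^sup>2 \<le> D * e"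
  proof -
    have "0 \<le> D * e" using that by (meson order_trans zero_le_power2)
    then show ?thesis using D by (simp add: e_def zero_le_mult_iff)
  qed
  show ?thesis
    unfolding psd2_iff_scaled[OF d2_pos] reduced X
    using a1 a3 a2 by (auto simp: D_def e_def mult.commute)
qed

theorem lemma2p2:
  fixes w1 w2 w4 a1 a2 a3 b1 b2 g :: complex
  assumes "norm w2 < 1" and "norm w1 \<le> 1" and "norm w4 \<le> 1"
  defines "d1 \<equiv> 1 - (norm w1)\<^sup>2" and "d2 \<equiv> 1 - (norm w2)\<^sup>2" and "d4 \<equiv> 1 - (norm w4)\<^sup>2"
  shows "contraction (Tmat w1 w2 w4 a1 a2 a3 b1 b2 g) \<longleftrightarrow>
    ( (norm a1)\<^sup>2 \<le> d1 * d2 \<and> (norm a3)\<^sup>2 \<le> d4 \<and> (norm a2)\<^sup>2 = d2 \<and>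
      b1 = - (a1 * a2 * cnj w2) / complex_of_real d2 \<and> b2 = 0 \<and>
      (norm g)\<^sup>2 * d2 \<le> (d1 * d2 - (norm a1)\<^sup>2) * (d4 - (norm a3)\<^sup>2) )
    \<or>
    ( (norm a1)\<^sup>2 \<le> d1 * d2 \<and> (norm a3)\<^sup>2 \<le> d4 \<and> (norm a2)\<^sup>2 < d2 \<and>
      (norm (b1 * complex_of_real d2 + a1 * a2 * cnj w2))\<^sup>2
         \<le> (d1 * d2 - (norm a1)\<^sup>2) * (d2 - (norm a2)\<^sup>2) \<and>
      (norm b2)\<^sup>2 \<le> (d2 - (norm a2)\<^sup>2) * (d4 - (norm a3)\<^sup>2) \<and>
      (norm (g * complex_of_real (d2 - (norm a2)\<^sup>2) + b2 * (cnj w2 * a1 + cnj a2 * b1)))\<^sup>2 * d2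
         \<le> ((d1 * d2 - (norm a1)\<^sup>2) * (d2 - (norm a2)\<^sup>2)
               - (norm (b1 * complex_of_real d2 + a1 * a2 * cnj w2))\<^sup>2)
           * ((d2 - (norm a2)\<^sup>2) * (d4 - (norm a3)\<^sup>2) - (norm b2)\<^sup>2) )"
  (is "?contraction \<longleftrightarrow> ?case_A \<or> ?case_B")
proof -
  have d2_pos: "0 < d2"
    using assms(1) unfolding d2_def by (simp add: power_less_one_iff abs_less_iff)
  define A where "A = d1 - (cmod a1)\<^sup>2 - (cmod b1)\<^sup>2"
  define B where "B = - (a1 * cnj w2 + b1 * cnj a2)"
  define D where "D = d2 - (cmod a2)\<^sup>2"
  define e where "e = d4 - (cmod a3)\<^sup>2"
  have contraction: "?contraction \<longleftrightarrow> 0 \<le> e \<and> psd2 A B D \<and>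
      psd2 (e * A - (cmod g)\<^sup>2) (of_real e * B - g * cnj b2) (e * D - (cmod b2)\<^sup>2)"
    unfolding A_def B_def D_def e_def
    by (rule contraction_Tmat_iff_psd2) (simp_all add: d1_def d2_def d4_def)
  consider "D < 0" | "D = 0" | "0 < D" by linarith
  then show ?thesis
  proof cases
    case 1
    then show ?thesis by (simp add: contraction psd2_def D_def)
  next
    case 2
    then have "?contraction \<longleftrightarrow> B = 0 \<and> b2 = 0 \<and> psd2 A g e"
      using psd2_schur_zero_pivot[of e A B g b2] by (simp add: contraction)
    also have "\<dots> \<longleftrightarrow> ?case_A"
      unfolding A_def B_def e_def using 2 d2_pos
      by (intro Tmat_boundary_case_iff) (simp_all add: D_def d2_def)
    finally show ?thesis using 2 by (auto simp: D_def)
  next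
    case 3
    then have "?contraction \<longleftrightarrow>
        psd2 (A * D - (cmod B)\<^sup>2) (g * of_real D - b2 * B) (e * D - (cmod b2)\<^sup>2)"
      by (simp add: contraction psd2_schur_pos_pivot)
    also have "\<dots> \<longleftrightarrow> ?case_B"
      unfolding A_def B_def D_def e_def using 3
      by (intro Tmat_interior_case_iff) (simp_all add: D_def d2_def)
    finally show ?thesis using 3 by (auto simp: D_def)
  qed
qed

end
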